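(* Let $\psi:(0,1]\to(0,\infty)$ with $\psi(1)=1$, $\lim_{r\to0+}\psi(r)=0$, and $I_\psi\subset(0,1)\cup(1,2)$. Then on $C^\psi(\mathbb{R}^d)$ the norm $\|f\|_{C^\psi}$ is equivalent to the norm $\|f\|_{C^0}+[[f]]_{C^\psi}$; i.e. there is $c\ge1$ such that $c^{-1}(\|f\|_{C^0}+[[f]]_{C^\psi})\le\|f\|_{C^\psi}\le c(\|f\|_{C^0}+[[f]]_{C^\psi})$ for all $f\in C^\psi(\mathbb{R}^d)$.
   Context: A function $g:(0,1]\to(0,\infty)$ is almost increasing if there is $c\in(0,1]$ with $c\,g(r)\le g(R)$ for $0<r\le R\le1$, almost decreasing if there is $C\ge1$ with $g(R)\le Cg(r)$ for $0<r\le R\le1$. $M_g=\inf\{\alpha: g(r)/r^\alpha\text{ almost decreasing on }(0,1]\}$, $m_g=\sup\{\alpha: g(r)/r^\alpha\text{ almost increasing on }(0,1]\}$, $I_g=[m_g,M_g]$. $\|f\|_{C^0}=\sup|f|$; $\|D^jf\|_{C^0}=\max_{|\gamma|=j}\|D^\gamma f\|_{C^0}$. For $j\in\mathbb{N}_0$, $[f]_{C^{-j;\psi}}=\sup_{x\in\mathbb{R}^d}\sup_{0<|h|\le1}\frac{|f(x+h)-f(x)|}{\psi(|h|)|h|^{-j}}$, $[D^kf]_{C^{-k;\psi}}=\max_{|\gamma|=k}[D^\gamma f]_{C^{-k;\psi}}$. If $m_\psi\in(k,k+1]$, $k\in\mathbb{N}_0$, $C^\psi(\mathbb{R}^d)$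 is the set of continuous $f$ with all $D^\gamma f$, $|\gamma|\le k$, bounded continuous and $[D^\gamma f]_{C^{-k;\psi}}<\infty$ for $|\gamma|=k$, with $\|f\|_{C^\psi}=\sum_{j=0}^k\|D^jf\|_{C^0}+[D^kf]_{C^{-k;\psi}}$. Finally $[[f]]_{C^\psi}=\sup_{x\in\mathbb{R}^d}\sup_{0<|h|\le1}\frac{|f(x+h)-2f(x)+f(x-h)|}{\psi(|h|)}$. *)

theory Defs
  imports "HOL-Analysis.Analysis" "HOL-Library.Extended_Real"
begin

definition almost_increasing :: "(real \<Rightarrow> real) \<Rightarrow> bool" where
  "almost_increasing g \<longleftrightarrow>
     (\<exists>c. 0 < c \<and> c \<le> 1 \<and> (\<forall>r R. 0 < r \<and> r \<le> R \<and> R \<le> 1 \<longrightarrow> c * g r \<le> g R))"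

definition almost_decreasing :: "(real \<Rightarrow> real) \<Rightarrow> bool" where
  "almost_decreasing g \<longleftrightarrow>
     (\<exists>C. 1 \<le> C \<and> (\<forall>r R. 0 < r \<and> r \<le> R \<and> R \<le> 1 \<longrightarrow> g R \<le> C * g r))"

text \<open>Upper and lower indices, taken in the extended reals (inf of empty set is +infinity,
  sup of empty set is -infinity).\<close>

definition upper_index :: "(real \<Rightarrow> real) \<Rightarrow> ereal" where
  "upper_index g = Inf (ereal ` {\<alpha>. almost_decreasing (\<lambda>r. g r / r powr \<alpha>)})"

definition lower_index :: "(real \<Rightarrow> real) \<Rightarrow> ereal" where
  "lower_index g = Sup (ereal ` {\<alpha>. almost_increasing (\<lambda>r. g r / r powr \<alpha>)})"

definition index_interval :: "(real \<Rightarrow> real) \<Rightarrow> ereal set" where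
  "index_interval g = {x. lower_index g \<le> x \<and> x \<le> upper_index g}"

definition dirderiv :: "('a::real_normed_vector \<Rightarrow> real) \<Rightarrow> 'a \<Rightarrow> 'a \<Rightarrow> real" where
  "dirderiv f b x = deriv (\<lambda>t. f (x + t *\<^sub>R b)) 0"

fun Dlist :: "('a::real_normed_vector \<Rightarrow> real) \<Rightarrow> 'a list \<Rightarrow> 'a \<Rightarrow> real" where
  "Dlist f [] = f"
| "Dlist f (b # bs) = dirderiv (Dlist f bs) b"

fun Dexists :: "('a::real_normed_vector \<Rightarrow> real) \<Rightarrow> 'a list \<Rightarrow> bool" where
  "Dexists f [] = True"
| "Dexists f (b # bs) =
     (Dexists f bs \<and> (\<forall>x. (\<lambda>t. Dlist f bs (x + t *\<^sub>R b)) differentiable (at 0)))"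

definition multi_indices :: "nat \<Rightarrow> 'a::euclidean_space list set" where
  "multi_indices j = {\<gamma>. set \<gamma> \<subseteq> Basis \<and> length \<gamma> = j}"

definition sup_norm :: "('a \<Rightarrow> real) \<Rightarrow> real" where
  "sup_norm f = (SUP x. \<bar>f x\<bar>)"

definition Dnorm :: "nat \<Rightarrow> ('a::euclidean_space \<Rightarrow> real) \<Rightarrow> real" where
  "Dnorm j f = Max ((\<lambda>\<gamma>. sup_norm (Dlist f \<gamma>)) ` multi_indices j)"

definition quot_set :: "(real \<Rightarrow> real) \<Rightarrow> nat \<Rightarrow> ('a::euclidean_space \<Rightarrow> real) \<Rightarrow> real set" where
  "quot_set \<psi> j g = {\<bar>g (x + h) - g x\<bar> / (\<psi> (norm h) * norm h powr (- real j)) | x h.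
                       0 < norm h \<and> norm h \<le> 1}"

definition holder_seminorm :: "(real \<Rightarrow> real) \<Rightarrow> nat \<Rightarrow> ('a::euclidean_space \<Rightarrow> real) \<Rightarrow> real" where
  "holder_seminorm \<psi> j g = Sup (quot_set \<psi> j g)"

definition Dholder :: "(real \<Rightarrow> real) \<Rightarrow> nat \<Rightarrow> ('a::euclidean_space \<Rightarrow> real) \<Rightarrow> real" where
  "Dholder \<psi> k f = Max ((\<lambda>\<gamma>. holder_seminorm \<psi> k (Dlist f \<gamma>)) ` multi_indices k)"

definition psi_order :: "(real \<Rightarrow> real) \<Rightarrow> nat" where
  "psi_order \<psi> = (THE k::nat. ereal (real k) < lower_index \<psi> \<and> lower_index \<psi> \<le> ereal (real k + 1))"

definition in_Cpsi :: "(real \<Rightarrow> real) \<Rightarrow> ('a::euclidean_space \<Rightarrow> real) \<Rightarrow> bool" where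
  "in_Cpsi \<psi> f \<longleftrightarrow>
     (\<exists>k::nat. ereal (real k) < lower_index \<psi> \<and> lower_index \<psi> \<le> ereal (real k + 1) \<and>
        continuous_on UNIV f \<and>
        (\<forall>\<gamma>. set \<gamma> \<subseteq> Basis \<and> length \<gamma> \<le> k \<longrightarrow>
             Dexists f \<gamma> \<and> continuous_on UNIV (Dlist f \<gamma>) \<and> bounded (range (Dlist f \<gamma>))) \<and>
        (\<forall>\<gamma>\<in>multi_indices k. bdd_above (quot_set \<psi> k (Dlist f \<gamma>))))"

definition Cpsi_norm :: "(real \<Rightarrow> real) \<Rightarrow> ('a::euclidean_space \<Rightarrow> real) \<Rightarrow> real" where
  "Cpsi_norm \<psi> f = (\<Sum>j\<le>psi_order \<psi>. Dnorm j f) + Dholder \<psi> (psi_order \<psi>) f"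

definition second_diff_set :: "(real \<Rightarrow> real) \<Rightarrow> ('a::euclidean_space \<Rightarrow> real) \<Rightarrow> real set" where
  "second_diff_set \<psi> f = {\<bar>f (x + h) - 2 * f x + f (x - h)\<bar> / \<psi> (norm h) | x h.
                            0 < norm h \<and> norm h \<le> 1}"

definition second_diff_seminorm :: "(real \<Rightarrow> real) \<Rightarrow> ('a::euclidean_space \<Rightarrow> real) \<Rightarrow> real" where
  "second_diff_seminorm \<psi> f = Sup (second_diff_set \<psi> f)"

end

theory Submission
  imports Defs
begin

text \<open>
  Since the index interval of \<psi> lies in (0,1) \<union> (1,2), either \<psi> has order 0 and
  \<psi>(r)/r^\<beta> is almost decreasing for some \<beta> < 1, or \<psi> has order 1 and \<psi>(r)/r^\<alpha> is almost
  increasing for some \<alpha> > 1.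

  That the C^\<psi> norm dominates the second-difference seminorm is elementary: for order 0 a second
  difference is a difference of two first differences, for order 1 it is controlled coordinatewise
  by the mean value theorem applied to the partial derivatives.

  The converse is Marchaud's dyadic telescoping. Write D(y,k) = f(y+k) - 2 f(y) + f(y-k). For
  order 0, f(x+h) - f(x) = 2^-n (f(x + 2^n h) - f(x)) - \<Sum>j<n. 2^-(j+1) D(x + 2^j h, 2^j h), with n
  chosen so that 2^n |h| is about 1; the almost decrease of \<psi>(r)/r^\<beta> with \<beta> < 1 makes the sum
  geometric. For order 1, halving the step instead bounds the Taylor remainder
  f(y + s e) - f(y) - s d_e f(y) by a geometric sum of second differences at the scales s/2^j, now
  using the almost increase of \<psi>(r)/r^\<alpha> with \<alpha> > 1. Finally, with s = |h|,
  s (d_e f(x+h) - d_e f(x)) is a mixed difference of f, itself the difference of two second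
  differences, corrected by two such remainders.
\<close>

section \<open>The indices of \<psi>\<close>

lemma almost_increasing_powrD:
  assumes "almost_increasing (\<lambda>r. \<psi> r / r powr \<alpha>)"
  obtains c where "0 < c" "\<And>r R. 0 < r \<Longrightarrow> r \<le> R \<Longrightarrow> R \<le> 1 \<Longrightarrow> \<psi> r \<le> (r/R) powr \<alpha> * \<psi> R / c"
proof -
  obtain c where c: "0 < c" "\<And>r R. 0 < r \<Longrightarrow> r \<le> R \<Longrightarrow> R \<le> 1 \<Longrightarrow> c * (\<psi> r / r powr \<alpha>) \<le> \<psi> R / R powr \<alpha>"
    using assms unfolding almost_increasing_def by blast
  have "\<psi> r \<le> (r/R) powr \<alpha> * \<psi> R / c" if "0 < r" "r \<le> R" "R \<le> 1" for r R
    using c(2)[OF that] c(1) that by (simp add: powr_divide field_simps)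
  with c(1) show thesis by (rule that)
qed

lemma almost_decreasing_powrD:
  assumes "almost_decreasing (\<lambda>r. \<psi> r / r powr \<beta>)"
  obtains C where "1 \<le> C" "\<And>r R. 0 < r \<Longrightarrow> r \<le> R \<Longrightarrow> R \<le> 1 \<Longrightarrow> \<psi> R \<le> C * (R/r) powr \<beta> * \<psi> r"
proof -
  obtain C where C: "1 \<le> C" "\<And>r R. 0 < r \<Longrightarrow> r \<le> R \<Longrightarrow> R \<le> 1 \<Longrightarrow> \<psi> R / R powr \<beta> \<le> C * (\<psi> r / r powr \<beta>)"
    using assms unfolding almost_decreasing_def by blast
  have "\<psi> R \<le> C * (R/r) powr \<beta> * \<psi> r" if "0 < r" "r \<le> R" "R \<le> 1" for r R
    using C(2)[OF that] that by (simp add: powr_divide field_simps)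
  with C(1) show thesis by (rule that)
qed

lemma almost_increasing_exponent_le:
  assumes one: "\<psi> 1 = 1"
    and inc: "almost_increasing (\<lambda>r. \<psi> r / r powr \<alpha>)"
    and dec: "almost_decreasing (\<lambda>r. \<psi> r / r powr \<beta>)"
  shows "\<alpha> \<le> \<beta>"
proof (rule ccontr)
  assume "\<not> \<alpha> \<le> \<beta>"
  then have "0 < \<alpha> - \<beta>" by simp
  obtain c where c: "0 < c" "\<And>r R. 0 < r \<Longrightarrow> r \<le> R \<Longrightarrow> R \<le> 1 \<Longrightarrow> \<psi> r \<le> (r/R) powr \<alpha> * \<psi> R / c"
    using almost_increasing_powrD[OF inc] by blast
  obtain C where C: "1 \<le> C" "\<And>r R. 0 < r \<Longrightarrow> r \<le> R \<Longrightarrow> R \<le> 1 \<Longrightarrow> \<psi> R \<le> C * (R/r) powr \<beta> * \<psi> r"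
    using almost_decreasing_powrD[OF dec] by blast
  define q where "q = c / (2 * C)"
  define r where "r = q powr (1 / (\<alpha> - \<beta>))"
  have "c \<le> 1" using c(2)[of 1 1] c(1) one by (simp add: field_simps)
  then have q: "0 < q" "q < 1" using c C by (auto simp: q_def field_simps)
  have r: "0 < r" "r \<le> 1" using q \<open>0 < \<alpha> - \<beta>\<close> by (auto simp: r_def powr_le1)
  have up: "c * \<psi> r \<le> r powr \<alpha>" and low: "r powr \<beta> \<le> C * \<psi> r"
    using c(2)[of r 1] C(2)[of r 1] c(1) r one by (simp_all add: powr_divide field_simps)
  have "c * r powr \<beta> \<le> c * (C * \<psi> r)" using low c(1) by simp
  also have "\<dots> = C * (c * \<psi> r)" by simp
  also have "\<dots> \<le> C * r powr \<alpha>" using up C(1) by simp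
  finally have "c \<le> C * r powr (\<alpha> - \<beta>)"
    using r by (simp add: powr_diff field_simps)
  also have "r powr (\<alpha> - \<beta>) = q" using q \<open>0 < \<alpha> - \<beta>\<close> by (simp add: r_def powr_powr)
  also have "C * q = c / 2" using C by (simp add: q_def)
  finally show False using c by simp
qed

lemma lower_index_le_upper_index:
  assumes "\<psi> 1 = 1"
  shows "lower_index \<psi> \<le> upper_index \<psi>"
  unfolding lower_index_def upper_index_def
  by (auto intro!: Sup_least Inf_greatest almost_increasing_exponent_le[of \<psi>, OF assms])

lemma psi_order_eqI:
  assumes "ereal (real k) < lower_index \<psi>" "lower_index \<psi> \<le> ereal (real k + 1)"
  shows "psi_order \<psi> = k"
  unfolding psi_order_def
proof (rule the_equality)
  fix k' assume k': "ereal (real k') < lower_index \<psi> \<and> lower_index \<psi> \<le> ereal (real k' + 1)"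
  have "ereal (real k') < ereal (real k + 1)" using k' assms(2) by (blast intro: less_le_trans)
  moreover have "ereal (real k) < ereal (real k' + 1)" using k' assms(1) by (blast intro: less_le_trans)
  ultimately show "k' = k" by simp
qed (use assms in simp)

lemma psi_order_cases:
  assumes one: "\<psi> 1 = 1" and idx: "index_interval \<psi> \<subseteq> ereal ` ({0<..<1} \<union> {1<..<2})"
  obtains (order0) \<beta> where "psi_order \<psi> = 0" "\<beta> < 1" "almost_decreasing (\<lambda>r. \<psi> r / r powr \<beta>)"
    | (order1) \<alpha> where "psi_order \<psi> = 1" "1 < \<alpha>" "almost_increasing (\<lambda>r. \<psi> r / r powr \<alpha>)"
proof -
  have "lower_index \<psi> \<in> index_interval \<psi>"
    using lower_index_le_upper_index[of \<psi>, OF one] by (simp add: index_interval_def)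
  then obtain m where m: "lower_index \<psi> = ereal m" "m \<in> {0<..<1} \<union> {1<..<2}"
    using idx by blast
  show thesis
  proof (cases "m < 1")
    case True
    then have "psi_order \<psi> = 0" using m by (intro psi_order_eqI) auto
    have "ereal 1 \<notin> index_interval \<psi>" using idx by auto
    then have "upper_index \<psi> < ereal 1" using m True by (auto simp: index_interval_def)
    then obtain \<beta> where "\<beta> < 1" "almost_decreasing (\<lambda>r. \<psi> r / r powr \<beta>)"
      unfolding upper_index_def Inf_less_iff by auto
    with \<open>psi_order \<psi> = 0\<close> show thesis by (rule order0)
  next
    case False
    then have "1 < m" using m by auto
    then have "psi_order \<psi> = 1" using m by (intro psi_order_eqI) auto
    have "ereal 1 < lower_index \<psi>" using \<open>1 < m\<close> m(1) by simp
    then obtain \<alpha> where "1 < \<alpha>" "almost_increasing (\<lambda>r. \<psi> r / r powr \<alpha>)"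
      unfolding lower_index_def less_Sup_iff by auto
    with \<open>psi_order \<psi> = 1\<close> show thesis by (rule order1)
  qed
qed

section \<open>Seminorms defined as suprema\<close>

lemma sup_norm_upper: "bounded (range g) \<Longrightarrow> \<bar>g x\<bar> \<le> sup_norm g"
  unfolding sup_norm_def bounded_iff
  by (intro cSUP_upper) (auto simp: bdd_above_def)

lemma sup_norm_least: "(\<And>x. \<bar>g x\<bar> \<le> B) \<Longrightarrow> sup_norm g \<le> B"
  unfolding sup_norm_def by (auto intro: cSUP_least)

lemma sup_norm_nonneg: "bounded (range g) \<Longrightarrow> 0 \<le> sup_norm g"
  using sup_norm_upper[of g undefined] by simp

lemma ex_norm_in_unit_interval: "\<exists>h::'a::euclidean_space. 0 < norm h \<and> norm h \<le> 1"
  by (metis SOME_Basis norm_Basis order_refl zero_less_one)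

lemma holder_seminorm_upper:
  fixes g :: "'a::euclidean_space \<Rightarrow> real"
  assumes pos: "\<And>r. 0 < r \<Longrightarrow> r \<le> 1 \<Longrightarrow> 0 < \<psi> r"
    and bdd: "bdd_above (quot_set \<psi> j g)" and h: "0 < norm h" "norm h \<le> 1"
  shows "\<bar>g (x + h) - g x\<bar> \<le> holder_seminorm \<psi> j g * (\<psi> (norm h) * norm h powr (- real j))"
proof -
  have "\<bar>g (x + h) - g x\<bar> / (\<psi> (norm h) * norm h powr (- real j)) \<le> holder_seminorm \<psi> j g"
    unfolding holder_seminorm_def using bdd h by (intro cSup_upper) (auto simp: quot_set_def)
  moreover have "0 < \<psi> (norm h) * norm h powr (- real j)" using pos h by simp
  ultimately show ?thesis by (simp add: divide_le_eq)
qed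

lemma holder_seminorm_least:
  fixes g :: "'a::euclidean_space \<Rightarrow> real"
  assumes pos: "\<And>r. 0 < r \<Longrightarrow> r \<le> 1 \<Longrightarrow> 0 < \<psi> r"
    and B: "\<And>x h. 0 < norm h \<Longrightarrow> norm h \<le> 1 \<Longrightarrow>
              \<bar>g (x + h) - g x\<bar> \<le> B * (\<psi> (norm h) * norm h powr (- real j))"
  shows "bdd_above (quot_set \<psi> j g)" and "holder_seminorm \<psi> j g \<le> B"
proof -
  have le: "y \<le> B" if "y \<in> quot_set \<psi> j g" for y
    using that B pos unfolding quot_set_def by (auto simp: divide_le_eq)
  then show "bdd_above (quot_set \<psi> j g)" by (auto simp: bdd_above_def)
  have "quot_set \<psi> j g \<noteq> {}"
    using ex_norm_in_unit_interval[where 'a='a] unfolding quot_set_def by blast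
  with le show "holder_seminorm \<psi> j g \<le> B"
    unfolding holder_seminorm_def by (rule cSup_least[rotated])
qed

lemma holder_seminorm_nonneg:
  fixes g :: "'a::euclidean_space \<Rightarrow> real"
  assumes pos: "\<And>r. 0 < r \<Longrightarrow> r \<le> 1 \<Longrightarrow> 0 < \<psi> r"
    and bdd: "bdd_above (quot_set \<psi> j g)"
  shows "0 \<le> holder_seminorm \<psi> j g"
proof -
  obtain h :: 'a where h: "0 < norm h" "norm h \<le> 1" using ex_norm_in_unit_interval by blast
  have "0 \<le> holder_seminorm \<psi> j g * (\<psi> (norm h) * norm h powr (- real j))"
    using holder_seminorm_upper[OF pos bdd h, of 0] by linarith
  moreover have "0 < \<psi> (norm h) * norm h powr (- real j)" using pos h by simp
  ultimately show ?thesis by (simp add: zero_le_mult_iff)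
qed

lemma second_diff_seminorm_upper:
  fixes f :: "'a::euclidean_space \<Rightarrow> real"
  assumes pos: "\<And>r. 0 < r \<Longrightarrow> r \<le> 1 \<Longrightarrow> 0 < \<psi> r"
    and bdd: "bdd_above (second_diff_set \<psi> f)" and h: "0 < norm h" "norm h \<le> 1"
  shows "\<bar>f (x + h) - 2 * f x + f (x - h)\<bar> \<le> second_diff_seminorm \<psi> f * \<psi> (norm h)"
proof -
  have "\<bar>f (x + h) - 2 * f x + f (x - h)\<bar> / \<psi> (norm h) \<le> second_diff_seminorm \<psi> f"
    unfolding second_diff_seminorm_def using bdd h
    by (intro cSup_upper) (auto simp: second_diff_set_def)
  moreover have "0 < \<psi> (norm h)" using pos h by simp
  ultimately show ?thesis by (simp add: divide_le_eq)
qed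

lemma second_diff_seminorm_least:
  fixes f :: "'a::euclidean_space \<Rightarrow> real"
  assumes pos: "\<And>r. 0 < r \<Longrightarrow> r \<le> 1 \<Longrightarrow> 0 < \<psi> r"
    and B: "\<And>x h. 0 < norm h \<Longrightarrow> norm h \<le> 1 \<Longrightarrow> \<bar>f (x + h) - 2 * f x + f (x - h)\<bar> \<le> B * \<psi> (norm h)"
  shows "bdd_above (second_diff_set \<psi> f)" and "second_diff_seminorm \<psi> f \<le> B"
proof -
  have le: "y \<le> B" if "y \<in> second_diff_set \<psi> f" for y
    using that B pos unfolding second_diff_set_def by (auto simp: divide_le_eq)
  then show "bdd_above (second_diff_set \<psi> f)" by (auto simp: bdd_above_def)
  have "second_diff_set \<psi> f \<noteq> {}"
    using ex_norm_in_unit_interval[where 'a='a] unfolding second_diff_set_def by blast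
  with le show "second_diff_seminorm \<psi> f \<le> B"
    unfolding second_diff_seminorm_def by (rule cSup_least[rotated])
qed

lemma second_diff_seminorm_nonneg:
  fixes f :: "'a::euclidean_space \<Rightarrow> real"
  assumes pos: "\<And>r. 0 < r \<Longrightarrow> r \<le> 1 \<Longrightarrow> 0 < \<psi> r"
    and bdd: "bdd_above (second_diff_set \<psi> f)"
  shows "0 \<le> second_diff_seminorm \<psi> f"
proof -
  obtain h :: 'a where h: "0 < norm h" "norm h \<le> 1" using ex_norm_in_unit_interval by blast
  have "0 \<le> second_diff_seminorm \<psi> f * \<psi> (norm h)"
    using second_diff_seminorm_upper[OF pos bdd h, of 0] by linarith
  moreover have "0 < \<psi> (norm h)" using pos h by simp
  ultimately show ?thesis by (simp add: zero_le_mult_iff)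
qed

section \<open>Dyadic telescoping\<close>

lemma first_difference_dyadic:
  fixes g :: "real \<Rightarrow> real"
  shows "\<bar>g 1 - g 0\<bar> \<le> \<bar>g (2^n) - g 0\<bar> / 2^n + (\<Sum>j<n. \<bar>g (2^Suc j) - 2 * g (2^j) + g 0\<bar> / 2^Suc j)"
proof (induction n)
  case (Suc n)
  let ?d = "g (2^Suc n) - 2 * g (2^n) + g 0"
  have "2 * (g (2^n) - g 0) = (g (2^Suc n) - g 0) - ?d" by simp
  then have "2 * \<bar>g (2^n) - g 0\<bar> \<le> \<bar>g (2^Suc n) - g 0\<bar> + \<bar>?d\<bar>" by linarith
  then have "\<bar>g (2^n) - g 0\<bar> / 2^n \<le> \<bar>g (2^Suc n) - g 0\<bar> / 2^Suc n + \<bar>?d\<bar> / 2^Suc n"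
    by (simp add: field_simps)
  with Suc.IH show ?case by simp
qed simp

lemma taylor_remainder_dyadic:
  fixes g :: "real \<Rightarrow> real"
  shows "\<bar>g s - g 0 - s * D\<bar> \<le> 2^n * \<bar>g (s / 2^n) - g 0 - s / 2^n * D\<bar>
           + (\<Sum>j<n. 2^j * \<bar>g (s / 2^j) - 2 * g (s / 2^Suc j) + g 0\<bar>)"
proof (induction n)
  case (Suc n)
  define R where "R t = g t - g 0 - t * D" for t
  let ?d = "g (s / 2^n) - 2 * g (s / 2^Suc n) + g 0"
  have "R (s / 2^n) = 2 * R (s / 2^Suc n) + ?d" by (simp add: R_def field_simps)
  then have "\<bar>R (s / 2^n)\<bar> \<le> 2 * \<bar>R (s / 2^Suc n)\<bar> + \<bar>?d\<bar>"
    by (metis abs_mult abs_numeral abs_triangle_ineq)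
  then have "2^n * \<bar>R (s / 2^n)\<bar> \<le> 2^n * (2 * \<bar>R (s / 2^Suc n)\<bar> + \<bar>?d\<bar>)"
    by (simp add: mult_left_mono)
  with Suc.IH show ?case by (simp add: R_def algebra_simps)
qed simp

lemma dyadic_scale_exists:
  fixes t :: real
  assumes "0 < t" "t \<le> 1"
  obtains n where "2^n * t \<le> 1" "1 < 2^Suc n * t"
proof (rule ccontr)
  assume "\<not> thesis"
  then have step: "2^n * t \<le> 1 \<Longrightarrow> 2^Suc n * t \<le> 1" for n
    using that by fastforce
  have all: "2^n * t \<le> 1" for n
    by (induction n) (use assms step in auto)
  obtain N where "1/t < 2^N" using real_arch_pow[of 2 "1/t"] by auto
  with all[of N] assms(1) show False by (simp add: field_simps)
qed

lemma powr_le_psi_if_almost_decreasing: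
  fixes \<psi> :: "real \<Rightarrow> real"
  assumes one: "\<psi> 1 = 1"
    and dec: "\<And>r R. 0 < r \<Longrightarrow> r \<le> R \<Longrightarrow> R \<le> 1 \<Longrightarrow> \<psi> R \<le> C * (R/r) powr \<beta> * \<psi> r"
    and t: "0 < t" "t \<le> 1"
  shows "t powr \<beta> \<le> C * \<psi> t"
  using dec[of t 1] one t by (simp add: powr_divide field_simps)

lemma psi_le_if_almost_increasing:
  fixes \<psi> :: "real \<Rightarrow> real"
  assumes inc: "\<And>r R. 0 < r \<Longrightarrow> r \<le> R \<Longrightarrow> R \<le> 1 \<Longrightarrow> \<psi> r \<le> (r/R) powr \<alpha> * \<psi> R / c"
    and "0 < c" "0 \<le> \<alpha>" "0 \<le> \<psi> R" "0 < r" "r \<le> R" "R \<le> 1"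
  shows "\<psi> r \<le> \<psi> R / c"
proof -
  have "(r/R) powr \<alpha> \<le> 1" using assms by (intro powr_le1) simp_all
  then have "(r/R) powr \<alpha> * \<psi> R / c \<le> \<psi> R / c"
    using assms by (simp add: divide_right_mono mult_left_le_one_le)
  with inc[OF assms(5-7)] show ?thesis by linarith
qed

lemma dyadic_sum_le_if_almost_decreasing:
  fixes \<psi> :: "real \<Rightarrow> real"
  assumes dec: "\<And>r R. 0 < r \<Longrightarrow> r \<le> R \<Longrightarrow> R \<le> 1 \<Longrightarrow> \<psi> R \<le> C * (R/r) powr \<beta> * \<psi> r"
    and "\<beta> < 1" "0 \<le> C" "0 < t" "0 \<le> \<psi> t" and scale: "\<And>j. j < n \<Longrightarrow> 2^j * t \<le> 1"
  shows "(\<Sum>j<n. \<psi> (2^j * t) / 2^Suc j) \<le> C / (2 * (1 - 2 powr (\<beta> - 1))) * \<psi> t"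
proof -
  define q :: real where "q = 2 powr (\<beta> - 1)"
  have q: "0 < q" "q < 1" using \<open>\<beta> < 1\<close> by (auto simp: q_def powr_less_one)
  have "\<psi> (2^j * t) / 2^Suc j \<le> C * \<psi> t / 2 * q^j" if "j < n" for j
  proof -
    have "\<psi> (2^j * t) \<le> C * (2^j) powr \<beta> * \<psi> t"
      using dec[of t "2^j * t"] scale[OF that] \<open>0 < t\<close> by simp
    then have "\<psi> (2^j * t) / 2^Suc j \<le> C * \<psi> t * ((2^j) powr \<beta> / 2^Suc j)"
      by (simp add: divide_right_mono mult_ac)
    also have "(2^j) powr \<beta> / 2^Suc j = q^j / 2"
      by (simp add: q_def powr_diff powr_realpow[symmetric] powr_powr power_divide field_simps
          flip: powr_power)
    finally show ?thesis by simp
  qed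
  then have "(\<Sum>j<n. \<psi> (2^j * t) / 2^Suc j) \<le> (\<Sum>j<n. C * \<psi> t / 2 * q^j)"
    by (intro sum_mono) simp
  also have "\<dots> = C * \<psi> t / 2 * (\<Sum>j<n. q^j)" by (simp add: sum_distrib_left)
  also have "\<dots> \<le> C * \<psi> t / 2 * (1 / (1 - q))"
    using q \<open>0 \<le> C\<close> \<open>0 \<le> \<psi> t\<close> by (intro mult_left_mono) (simp_all add: sum_gp_strict field_simps)
  finally show ?thesis by (simp add: q_def)
qed

lemma dyadic_sum_le_if_almost_increasing:
  fixes \<psi> :: "real \<Rightarrow> real"
  assumes inc: "\<And>r R. 0 < r \<Longrightarrow> r \<le> R \<Longrightarrow> R \<le> 1 \<Longrightarrow> \<psi> r \<le> (r/R) powr \<alpha> * \<psi> R / c"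
    and "0 < c" "1 < \<alpha>" "0 < s" "s \<le> 1" "0 \<le> \<psi> s"
  shows "(\<Sum>j<n. 2^j * \<psi> (s / 2^Suc j)) \<le> \<psi> s / (c * (1 - 2 powr (1 - \<alpha>)))"
proof -
  define q :: real where "q = 2 powr (1 - \<alpha>)"
  have q: "0 < q" "q < 1" using \<open>1 < \<alpha>\<close> by (auto simp: q_def powr_less_one)
  have "2^j * \<psi> (s / 2^Suc j) \<le> \<psi> s / c * q^j" for j
  proof -
    have "(1::real) \<le> 2^Suc j" by (rule one_le_power) simp
    then have "s / 2^Suc j \<le> s / 1" using \<open>0 < s\<close> by (intro divide_left_mono) simp_all
    then have "\<psi> (s / 2^Suc j) \<le> (1 / 2^Suc j) powr \<alpha> * \<psi> s / c"
      using inc[of "s / 2^Suc j" s] assms(4,5) by simp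
    then have "2^j * \<psi> (s / 2^Suc j) \<le> 2^j * ((1 / 2^Suc j) powr \<alpha> * \<psi> s / c)"
      by (rule mult_left_mono) simp
    also have "\<dots> = \<psi> s / c * (2^j * (1 / 2^Suc j) powr \<alpha>)" by simp
    also have "2^j * (1 / 2^Suc j) powr \<alpha> = q^j * 2 powr (- \<alpha>)"
    proof -
      have "1 / 2^Suc j = (2::real) powr (- real (Suc j))"
        by (subst powr_minus_divide, subst powr_realpow) simp_all
      then have "2^j * (1 / 2^Suc j) powr \<alpha> = 2 powr real j * 2 powr (- real (Suc j) * \<alpha>)"
        by (simp add: powr_powr powr_realpow)
      also have "\<dots> = 2 powr (real j * (1 - \<alpha>)) * 2 powr (- \<alpha>)"
        by (simp add: powr_add[symmetric] algebra_simps)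
      finally show ?thesis by (simp add: q_def powr_power)
    qed
    also have "\<psi> s / c * (q^j * 2 powr (- \<alpha>)) \<le> \<psi> s / c * q^j"
      using assms q powr_mono[of "- \<alpha>" 0 2] by (intro mult_left_mono mult_right_le_one_le) simp_all
    finally show ?thesis .
  qed
  then have "(\<Sum>j<n. 2^j * \<psi> (s / 2^Suc j)) \<le> (\<Sum>j<n. \<psi> s / c * q^j)"
    by (intro sum_mono) simp
  also have "\<dots> = \<psi> s / c * (\<Sum>j<n. q^j)" by (simp add: sum_distrib_left)
  also have "\<dots> \<le> \<psi> s / c * (1 / (1 - q))"
    using q assms by (intro mult_left_mono) (simp_all add: sum_gp_strict field_simps)
  finally show ?thesis by (simp add: q_def)
qed

lemma dyadic_second_differences_le:
  fixes f :: "'a::real_normed_vector \<Rightarrow> real" and \<psi> :: "real \<Rightarrow> real"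
  assumes pos: "\<And>r. 0 < r \<Longrightarrow> r \<le> 1 \<Longrightarrow> 0 < \<psi> r"
    and dec: "\<And>r R. 0 < r \<Longrightarrow> r \<le> R \<Longrightarrow> R \<le> 1 \<Longrightarrow> \<psi> R \<le> C * (R/r) powr \<beta> * \<psi> r"
    and "\<beta> < 1" "0 \<le> C" "0 \<le> S"
    and second: "\<And>x h. 0 < norm h \<Longrightarrow> norm h \<le> 1 \<Longrightarrow> \<bar>f (x + h) - 2 * f x + f (x - h)\<bar> \<le> S * \<psi> (norm h)"
    and h: "0 < norm h" "2^n * norm h \<le> 1"
  shows "(\<Sum>j<Suc n. \<bar>f (x + 2^Suc j *\<^sub>R h) - 2 * f (x + 2^j *\<^sub>R h) + f x\<bar> / 2^Suc j)
           \<le> S * (C / (2 * (1 - 2 powr (\<beta> - 1))) * \<psi> (norm h))"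
proof -
  define t where "t = norm h"
  have scale: "2^j * t \<le> 1" if "j < Suc n" for j
  proof -
    have "2^j * t \<le> 2^n * t" using that h by (intro mult_right_mono power_increasing) (simp_all add: t_def)
    with h(2) show ?thesis by (simp add: t_def)
  qed
  have "\<bar>f (x + 2^Suc j *\<^sub>R h) - 2 * f (x + 2^j *\<^sub>R h) + f x\<bar> \<le> S * \<psi> (2^j * t)" if "j < Suc n" for j
  proof -
    have "0 < norm (2^j *\<^sub>R h)" "norm (2^j *\<^sub>R h) \<le> 1"
      using h scale[OF that] by (simp_all add: t_def)
    then have "\<bar>f ((x + 2^j *\<^sub>R h) + 2^j *\<^sub>R h) - 2 * f (x + 2^j *\<^sub>R h) + f ((x + 2^j *\<^sub>R h) - 2^j *\<^sub>R h)\<bar>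
        \<le> S * \<psi> (norm (2^j *\<^sub>R h))"
      by (rule second)
    then show ?thesis by (simp add: t_def algebra_simps flip: scaleR_add_left)
  qed
  then have "(\<Sum>j<Suc n. \<bar>f (x + 2^Suc j *\<^sub>R h) - 2 * f (x + 2^j *\<^sub>R h) + f x\<bar> / 2^Suc j)
      \<le> (\<Sum>j<Suc n. S * (\<psi> (2^j * t) / 2^Suc j))"
    by (intro sum_mono) (simp add: divide_right_mono)
  also have "\<dots> = S * (\<Sum>j<Suc n. \<psi> (2^j * t) / 2^Suc j)" by (rule sum_distrib_left[symmetric])
  also have "\<dots> \<le> S * (C / (2 * (1 - 2 powr (\<beta> - 1))) * \<psi> t)"
  proof -
    have "t \<le> 1" using scale[of 0] by simp
    then have "(\<Sum>j<Suc n. \<psi> (2^j * t) / 2^Suc j) \<le> C / (2 * (1 - 2 powr (\<beta> - 1))) * \<psi> t"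
      using dec \<open>\<beta> < 1\<close> \<open>0 \<le> C\<close> h(1) pos[of t] scale
      by (intro dyadic_sum_le_if_almost_decreasing) (auto simp: t_def)
    with \<open>0 \<le> S\<close> show ?thesis by (rule mult_left_mono[rotated])
  qed
  finally show ?thesis by (simp add: t_def)
qed

lemma first_difference_le_second_difference:
  fixes f :: "'a::real_normed_vector \<Rightarrow> real" and \<psi> :: "real \<Rightarrow> real"
  assumes one: "\<psi> 1 = 1" and pos: "\<And>r. 0 < r \<Longrightarrow> r \<le> 1 \<Longrightarrow> 0 < \<psi> r"
    and dec: "\<And>r R. 0 < r \<Longrightarrow> r \<le> R \<Longrightarrow> R \<le> 1 \<Longrightarrow> \<psi> R \<le> C * (R/r) powr \<beta> * \<psi> r"
    and "\<beta> < 1" "0 \<le> C"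
    and bound: "\<And>x. \<bar>f x\<bar> \<le> F" and "0 \<le> S"
    and second: "\<And>x h. 0 < norm h \<Longrightarrow> norm h \<le> 1 \<Longrightarrow> \<bar>f (x + h) - 2 * f x + f (x - h)\<bar> \<le> S * \<psi> (norm h)"
    and h: "0 < norm h" "norm h \<le> 1"
  shows "\<bar>f (x + h) - f x\<bar> \<le> (2 * C * F + S * C / (2 * (1 - 2 powr (\<beta> - 1)))) * \<psi> (norm h)"
proof -
  define t where "t = norm h"
  obtain n where n: "2^n * t \<le> 1" "1 < 2^Suc n * t"
    using dyadic_scale_exists[of t] h by (auto simp: t_def)
  define g where "g \<tau> = f (x + \<tau> *\<^sub>R h)" for \<tau>
  have "0 \<le> F" using bound[of x] by linarith
  have "t \<le> t powr \<beta>" using powr_mono'[of \<beta> 1 t] h \<open>\<beta> < 1\<close> by (simp add: t_def)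
  also have "t powr \<beta> \<le> C * \<psi> t" using h by (intro powr_le_psi_if_almost_decreasing[OF one dec]) (simp_all add: t_def)
  finally have "t \<le> C * \<psi> t" .
  have far: "\<bar>g (2^Suc n) - g 0\<bar> / 2^Suc n \<le> 2 * C * F * \<psi> t"
  proof -
    have "\<bar>g (2^Suc n) - g 0\<bar> \<le> 2 * F"
      using bound[of "x + 2^Suc n *\<^sub>R h"] bound[of x] by (simp add: g_def)
    from divide_right_mono[OF this, of "2^Suc n"]
    have "\<bar>g (2^Suc n) - g 0\<bar> / 2^Suc n \<le> 2 * F * (1 / 2^Suc n)" by simp
    moreover have "1 / 2^Suc n < t" using n(2) by (simp add: field_simps)
    then have "1 / 2^Suc n \<le> C * \<psi> t" using \<open>t \<le> C * \<psi> t\<close> by linarith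
    ultimately show ?thesis
      using mult_left_mono[of "1 / 2^Suc n" "C * \<psi> t" "2 * F"] \<open>0 \<le> F\<close> by (simp add: mult_ac)
  qed
  have "\<bar>f (x + h) - f x\<bar>
      \<le> \<bar>g (2^Suc n) - g 0\<bar> / 2^Suc n + (\<Sum>j<Suc n. \<bar>g (2^Suc j) - 2 * g (2^j) + g 0\<bar> / 2^Suc j)"
    using first_difference_dyadic[of g "Suc n"] by (simp add: g_def)
  also have "\<dots> \<le> 2 * C * F * \<psi> t + S * (C / (2 * (1 - 2 powr (\<beta> - 1))) * \<psi> t)"
    using far dyadic_second_differences_le[OF pos dec \<open>\<beta> < 1\<close> \<open>0 \<le> C\<close> \<open>0 \<le> S\<close> second h(1) n(1)[unfolded t_def]]
    by (intro add_mono) (simp_all add: g_def t_def)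
  finally show ?thesis by (simp add: t_def algebra_simps)
qed

section \<open>Directional derivatives\<close>

lemma has_real_derivative_along_line:
  fixes f :: "'a::real_normed_vector \<Rightarrow> real"
  assumes "\<And>z. ((\<lambda>t. f (z + t *\<^sub>R b)) has_real_derivative f' z) (at 0)"
  shows "((\<lambda>t. f (x + t *\<^sub>R b)) has_real_derivative f' (x + t0 *\<^sub>R b)) (at t0)"
proof -
  have "((\<lambda>s. f ((x + t0 *\<^sub>R b) + ((s + t0) - t0) *\<^sub>R b)) has_real_derivative f' (x + t0 *\<^sub>R b)) (at 0)"
    using assms by simp
  then have "((\<lambda>t. f ((x + t0 *\<^sub>R b) + (t - t0) *\<^sub>R b)) has_real_derivative f' (x + t0 *\<^sub>R b)) (at (0 + t0))"
    by (simp only: DERIV_shift)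
  moreover have "(\<lambda>t. f ((x + t0 *\<^sub>R b) + (t - t0) *\<^sub>R b)) = (\<lambda>t. f (x + t *\<^sub>R b))"
    by (simp add: algebra_simps)
  ultimately show ?thesis by simp
qed

lemma dirderiv_has_real_derivative:
  assumes "(\<lambda>t. f (z + t *\<^sub>R b)) differentiable (at 0)"
  shows "((\<lambda>t. f (z + t *\<^sub>R b)) has_real_derivative dirderiv f b z) (at 0)"
  unfolding dirderiv_def using assms DERIV_deriv_iff_real_differentiable by blast

lemma dyadic_remainder_tendsto_zero:
  fixes g :: "real \<Rightarrow> real"
  assumes "(g has_real_derivative D) (at 0)" "s \<noteq> 0"
  shows "(\<lambda>n. 2^n * \<bar>g (s / 2^n) - g 0 - s / 2^n * D\<bar>) \<longlonglongrightarrow> 0"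
proof -
  have "((\<lambda>t. (g t - g 0) / t) \<longlongrightarrow> D) (at 0)" using DERIV_D[OF assms(1)] by simp
  moreover have "filterlim (\<lambda>n. s / 2^n) (at 0) sequentially"
    using assms(2) by (intro filterlim_atI LIMSEQ_divide_realpow_zero) auto
  ultimately have "(\<lambda>n. (g (s / 2^n) - g 0) / (s / 2^n)) \<longlonglongrightarrow> D"
    by (rule filterlim_compose)
  then have "(\<lambda>n. \<bar>s\<bar> * \<bar>(g (s / 2^n) - g 0) / (s / 2^n) - D\<bar>) \<longlonglongrightarrow> \<bar>s\<bar> * \<bar>D - D\<bar>"
    by (intro tendsto_intros)
  moreover have "\<bar>s\<bar> * \<bar>(g (s / 2^n) - g 0) / (s / 2^n) - D\<bar> = 2^n * \<bar>g (s / 2^n) - g 0 - s / 2^n * D\<bar>" for n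
  proof -
    have "\<bar>s\<bar> * \<bar>(g (s / 2^n) - g 0) / (s / 2^n) - D\<bar> = 2^n * \<bar>s / 2^n\<bar> * \<bar>(g (s / 2^n) - g 0) / (s / 2^n) - D\<bar>"
      by (simp add: abs_divide)
    also have "\<dots> = 2^n * \<bar>s / 2^n * ((g (s / 2^n) - g 0) / (s / 2^n) - D)\<bar>"
      by (simp add: abs_mult)
    also have "s / 2^n * ((g (s / 2^n) - g 0) / (s / 2^n) - D) = g (s / 2^n) - g 0 - s / 2^n * D"
      using assms(2) by (simp add: field_simps)
    finally show ?thesis .
  qed
  ultimately show ?thesis by simp
qed

lemma taylor_remainder_le_second_difference:
  fixes f :: "'a::real_normed_vector \<Rightarrow> real" and \<psi> :: "real \<Rightarrow> real"
  assumes deriv: "((\<lambda>t. f (y + t *\<^sub>R e)) has_real_derivative D) (at 0)" and "norm e = 1"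
    and pos: "\<And>r. 0 < r \<Longrightarrow> r \<le> 1 \<Longrightarrow> 0 < \<psi> r"
    and inc: "\<And>r R. 0 < r \<Longrightarrow> r \<le> R \<Longrightarrow> R \<le> 1 \<Longrightarrow> \<psi> r \<le> (r/R) powr \<alpha> * \<psi> R / c"
    and "0 < c" "1 < \<alpha>" "0 \<le> S"
    and second: "\<And>x h. 0 < norm h \<Longrightarrow> norm h \<le> 1 \<Longrightarrow> \<bar>f (x + h) - 2 * f x + f (x - h)\<bar> \<le> S * \<psi> (norm h)"
    and s: "0 < s" "s \<le> 1"
  shows "\<bar>f (y + s *\<^sub>R e) - f y - s * D\<bar> \<le> S / (c * (1 - 2 powr (1 - \<alpha>))) * \<psi> s"
proof -
  define g where "g t = f (y + t *\<^sub>R e)" for t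
  define K where "K = S / (c * (1 - 2 powr (1 - \<alpha>))) * \<psi> s"
  have second_dyadic: "\<bar>g (s / 2^j) - 2 * g (s / 2^Suc j) + g 0\<bar> \<le> S * \<psi> (s / 2^Suc j)" for j
  proof -
    define w where "w = (s / 2^Suc j) *\<^sub>R e"
    have "(1::real) \<le> 2^Suc j" by (rule one_le_power) simp
    then have "0 < norm w" "norm w \<le> 1"
      using s \<open>norm e = 1\<close> by (simp_all add: w_def divide_le_eq order_trans[OF _ \<open>1 \<le> 2^Suc j\<close>])
    then have "\<bar>f ((y + w) + w) - 2 * f (y + w) + f ((y + w) - w)\<bar> \<le> S * \<psi> (norm w)"
      by (rule second)
    then show ?thesis
      using s \<open>norm e = 1\<close> by (simp add: g_def w_def algebra_simps flip: scaleR_add_left)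
  qed
  have sum_le: "(\<Sum>j<n. 2^j * \<bar>g (s / 2^j) - 2 * g (s / 2^Suc j) + g 0\<bar>) \<le> K" for n
  proof -
    have "(\<Sum>j<n. 2^j * \<bar>g (s / 2^j) - 2 * g (s / 2^Suc j) + g 0\<bar>) \<le> (\<Sum>j<n. S * (2^j * \<psi> (s / 2^Suc j)))"
      using second_dyadic by (intro sum_mono) (simp add: mult_left_mono mult.left_commute)
    also have "\<dots> = S * (\<Sum>j<n. 2^j * \<psi> (s / 2^Suc j))" by (rule sum_distrib_left[symmetric])
    also have "\<dots> \<le> S * (\<psi> s / (c * (1 - 2 powr (1 - \<alpha>))))"
      using \<open>0 < c\<close> \<open>1 < \<alpha>\<close> s pos[OF s] \<open>0 \<le> S\<close>
      by (intro mult_left_mono dyadic_sum_le_if_almost_increasing[OF inc]) simp_all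
    also have "\<dots> = K" by (simp add: K_def)
    finally show ?thesis .
  qed
  have bound: "\<bar>g s - g 0 - s * D\<bar> - K \<le> 2^n * \<bar>g (s / 2^n) - g 0 - s / 2^n * D\<bar>" for n
    using taylor_remainder_dyadic[of g s D n] sum_le[of n] by linarith
  have "(g has_real_derivative D) (at 0)" using deriv by (simp add: g_def[abs_def])
  with s have "(\<lambda>n. 2^n * \<bar>g (s / 2^n) - g 0 - s / 2^n * D\<bar>) \<longlonglongrightarrow> 0"
    by (intro dyadic_remainder_tendsto_zero) simp_all
  then have "\<bar>g s - g 0 - s * D\<bar> - K \<le> 0"
    by (rule LIMSEQ_le_const) (use bound in blast)
  then show ?thesis by (simp add: g_def K_def)
qed

lemma mixed_difference_eq_second_differences:
  fixes f :: "'a::real_vector \<Rightarrow> real" and x h k :: 'a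
  defines "u \<equiv> (1/2) *\<^sub>R (h + k)" and "v \<equiv> (1/2) *\<^sub>R (h - k)"
  shows "f (x + h + k) - f (x + h) - f (x + k) + f x
    = (f ((x + u) + u) - 2 * f (x + u) + f ((x + u) - u))
      - (f ((x + u) + v) - 2 * f (x + u) + f ((x + u) - v))"
proof -
  have "u + u = h + k" "u + v = h" "u - v = k"
    by (simp_all add: u_def v_def algebra_simps flip: scaleR_add_left)
  then have p: "(x + u) + u = x + h + k" "(x + u) - u = x" "(x + u) + v = x + h" "(x + u) - v = x + k"
    by (simp_all add: algebra_simps)
  show ?thesis unfolding p by simp
qed

lemma partial_derivative_le:
  fixes f :: "'a::real_normed_vector \<Rightarrow> real" and \<psi> :: "real \<Rightarrow> real"
  assumes deriv: "((\<lambda>t. f (y + t *\<^sub>R e)) has_real_derivative D) (at 0)" and "norm e = 1"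
    and one: "\<psi> 1 = 1" and pos: "\<And>r. 0 < r \<Longrightarrow> r \<le> 1 \<Longrightarrow> 0 < \<psi> r"
    and inc: "\<And>r R. 0 < r \<Longrightarrow> r \<le> R \<Longrightarrow> R \<le> 1 \<Longrightarrow> \<psi> r \<le> (r/R) powr \<alpha> * \<psi> R / c"
    and "0 < c" "1 < \<alpha>" "0 \<le> S"
    and bound: "\<And>x. \<bar>f x\<bar> \<le> F"
    and second: "\<And>x h. 0 < norm h \<Longrightarrow> norm h \<le> 1 \<Longrightarrow> \<bar>f (x + h) - 2 * f x + f (x - h)\<bar> \<le> S * \<psi> (norm h)"
  shows "\<bar>D\<bar> \<le> 2 * F + S / (c * (1 - 2 powr (1 - \<alpha>)))"
proof -
  have "\<bar>f (y + 1 *\<^sub>R e) - f y - 1 * D\<bar> \<le> S / (c * (1 - 2 powr (1 - \<alpha>))) * \<psi> 1"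
    using assms by (intro taylor_remainder_le_second_difference[where f = f]) simp_all
  with one bound[of y] bound[of "y + e"] show ?thesis by simp
qed

lemma partial_derivative_difference_le:
  fixes f :: "'a::real_normed_vector \<Rightarrow> real" and \<psi> :: "real \<Rightarrow> real"
  assumes deriv: "\<And>y. ((\<lambda>t. f (y + t *\<^sub>R e)) has_real_derivative f' y) (at 0)" and "norm e = 1"
    and pos: "\<And>r. 0 < r \<Longrightarrow> r \<le> 1 \<Longrightarrow> 0 < \<psi> r"
    and inc: "\<And>r R. 0 < r \<Longrightarrow> r \<le> R \<Longrightarrow> R \<le> 1 \<Longrightarrow> \<psi> r \<le> (r/R) powr \<alpha> * \<psi> R / c"
    and "0 < c" "1 < \<alpha>" "0 \<le> S"
    and second: "\<And>x h. 0 < norm h \<Longrightarrow> norm h \<le> 1 \<Longrightarrow> \<bar>f (x + h) - 2 * f x + f (x - h)\<bar> \<le> S * \<psi> (norm h)"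
    and h: "0 < norm h" "norm h \<le> 1"
  shows "\<bar>f' (x + h) - f' x\<bar> * norm h \<le> (2 * S / c + 2 * S / (c * (1 - 2 powr (1 - \<alpha>)))) * \<psi> (norm h)"
proof -
  define s where "s = norm h"
  define k where "k = s *\<^sub>R e"
  define K where "K = S / (c * (1 - 2 powr (1 - \<alpha>))) * \<psi> s"
  have s: "0 < s" "s \<le> 1" "0 < \<psi> s" using h pos by (auto simp: s_def)
  have "norm k = s" using s \<open>norm e = 1\<close> by (simp add: k_def)
  have taylor: "\<bar>f (y + k) - f y - s * f' y\<bar> \<le> K" for y
    unfolding k_def K_def
    using assms s by (intro taylor_remainder_le_second_difference[where f = f]) simp_all
  have second_small: "\<bar>f (z + w) - 2 * f z + f (z - w)\<bar> \<le> S / c * \<psi> s" if "norm w \<le> s" for z w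
  proof (cases "w = 0")
    case False
    then have "\<bar>f (z + w) - 2 * f z + f (z - w)\<bar> \<le> S * \<psi> (norm w)"
      using that s by (intro second) simp_all
    also have "\<dots> \<le> S * (\<psi> s / c)"
      using False that s \<open>0 < c\<close> \<open>1 < \<alpha>\<close> \<open>0 \<le> S\<close>
      by (intro mult_left_mono psi_le_if_almost_increasing[OF inc]) simp_all
    finally show ?thesis by simp
  qed (use \<open>0 \<le> S\<close> \<open>0 < c\<close> s in simp)
  have half_le: "norm ((1/2) *\<^sub>R (h + k)) \<le> s" "norm ((1/2) *\<^sub>R (h - k)) \<le> s"
    using norm_triangle_ineq[of h k] norm_triangle_ineq4[of h k] \<open>norm k = s\<close>
    by (simp_all add: s_def)
  have "\<bar>f (x + h + k) - f (x + h) - f (x + k) + f x\<bar> \<le> 2 * (S / c * \<psi> s)"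
    unfolding mixed_difference_eq_second_differences
    using second_small[OF half_le(1), where z = "x + (1/2) *\<^sub>R (h + k)"]
      second_small[OF half_le(2), where z = "x + (1/2) *\<^sub>R (h + k)"] by linarith
  moreover have "s * (f' (x + h) - f' x)
      = (f (x + h + k) - f (x + h) - f (x + k) + f x)
        - (f (x + h + k) - f (x + h) - s * f' (x + h)) + (f (x + k) - f x - s * f' x)"
    by (simp add: algebra_simps)
  ultimately have "\<bar>f' (x + h) - f' x\<bar> * s \<le> 2 * (S / c * \<psi> s) + K + K"
    using taylor[of "x + h"] taylor[of x] s by (simp add: abs_mult mult.commute add.assoc)
  then show ?thesis by (simp add: s_def K_def algebra_simps)
qed

lemma difference_of_differences_le:
  fixes f :: "'a::euclidean_space \<Rightarrow> real"
  assumes deriv: "\<And>b z. b \<in> Basis \<Longrightarrow> ((\<lambda>t. f (z + t *\<^sub>R b)) has_real_derivative f' b z) (at 0)"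
    and K: "\<And>b z. b \<in> Basis \<Longrightarrow> \<bar>f' b z - f' b (z + d)\<bar> \<le> K"
  shows "\<bar>(f (x + h) - f x) - (f (x + d + h) - f (x + d))\<bar> \<le> (\<Sum>b\<in>Basis. \<bar>h \<bullet> b\<bar>) * K"
proof -
  define p where "p B = (\<Sum>b\<in>B. (h \<bullet> b) *\<^sub>R b)" for B
  define \<Delta> where "\<Delta> B = (f (x + p B) - f x) - (f (x + d + p B) - f (x + d))" for B
  have "\<bar>\<Delta> B\<bar> \<le> (\<Sum>b\<in>B. \<bar>h \<bullet> b\<bar>) * K" if "B \<subseteq> Basis" for B
    using finite_subset[OF that finite_Basis] that
  proof (induction B rule: finite_induct)
    case (insert b B)
    define G where "G t = f (x + p B + t *\<^sub>R b) - f (x + d + p B + t *\<^sub>R b)" for t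
    have b: "b \<in> Basis" using insert.prems by simp
    define G' where "G' t = f' b (x + p B + t *\<^sub>R b) - f' b (x + d + p B + t *\<^sub>R b)" for t
    have "(G has_real_derivative G' t) (at t)" for t
      unfolding G_def G'_def
      using has_real_derivative_along_line[of f b "f' b" "x + p B" t, OF deriv[OF b]]
        has_real_derivative_along_line[of f b "f' b" "x + d + p B" t, OF deriv[OF b]]
      by (rule DERIV_diff)
    moreover have "\<bar>G' t\<bar> \<le> K" for t
      using K[OF b, of "x + p B + t *\<^sub>R b"] by (simp add: G'_def algebra_simps)
    ultimately have "norm (G (h \<bullet> b) - G 0) \<le> K * norm (h \<bullet> b - 0)"
      by (intro field_differentiable_bound[of UNIV G G']) auto
    moreover have "\<Delta> (insert b B) = (G (h \<bullet> b) - G 0) + \<Delta> B"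
    proof -
      have "p (insert b B) = p B + (h \<bullet> b) *\<^sub>R b" using insert by (simp add: p_def add.commute)
      then show ?thesis by (simp add: \<Delta>_def G_def add.assoc)
    qed
    ultimately have "\<bar>\<Delta> (insert b B)\<bar> \<le> \<bar>h \<bullet> b\<bar> * K + (\<Sum>b\<in>B. \<bar>h \<bullet> b\<bar>) * K"
      using insert.IH insert.prems by (simp add: mult.commute)
    then show ?case using insert by (simp add: distrib_right)
  qed (simp add: \<Delta>_def p_def)
  from this[of Basis] show ?thesis by (simp add: \<Delta>_def p_def euclidean_representation)
qed

lemma second_difference_le_partial_derivative_difference:
  fixes f :: "'a::euclidean_space \<Rightarrow> real"
  assumes deriv: "\<And>b z. b \<in> Basis \<Longrightarrow> ((\<lambda>t. f (z + t *\<^sub>R b)) has_real_derivative f' b z) (at 0)"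
    and K: "\<And>b z. b \<in> Basis \<Longrightarrow> \<bar>f' b (z + h) - f' b z\<bar> \<le> K"
  shows "\<bar>f (x + h) - 2 * f x + f (x - h)\<bar> \<le> DIM('a) * norm h * K"
proof -
  have "0 \<le> K" using K[OF SOME_Basis, of 0] by linarith
  have "\<bar>(f ((x - h) + h) - f (x - h)) - (f ((x - h) + h + h) - f ((x - h) + h))\<bar>
      \<le> (\<Sum>b\<in>Basis. \<bar>h \<bullet> b\<bar>) * K"
    using K by (intro difference_of_differences_le[OF deriv]) (simp_all add: abs_minus_commute)
  also have "\<dots> \<le> (\<Sum>b\<in>(Basis::'a set). norm h) * K"
    using \<open>0 \<le> K\<close> by (intro mult_right_mono sum_mono Basis_le_norm) simp_all
  finally show ?thesis by (simp add: abs_minus_commute algebra_simps)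
qed

section \<open>Norm equivalence on C^\<psi>\<close>

lemma in_Cpsi_psi_order:
  fixes f :: "'a::euclidean_space \<Rightarrow> real"
  assumes "in_Cpsi \<psi> f"
  shows "\<And>\<gamma>. set \<gamma> \<subseteq> Basis \<Longrightarrow> length \<gamma> \<le> psi_order \<psi> \<Longrightarrow>
           Dexists f \<gamma> \<and> bounded (range (Dlist f \<gamma>))"
    and "\<And>\<gamma>. \<gamma> \<in> multi_indices (psi_order \<psi>) \<Longrightarrow> bdd_above (quot_set \<psi> (psi_order \<psi>) (Dlist f \<gamma>))"
proof -
  obtain k where "ereal (real k) < lower_index \<psi>" "lower_index \<psi> \<le> ereal (real k + 1)"
    and k: "\<forall>\<gamma>. set \<gamma> \<subseteq> Basis \<and> length \<gamma> \<le> k \<longrightarrow>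
              Dexists f \<gamma> \<and> continuous_on UNIV (Dlist f \<gamma>) \<and> bounded (range (Dlist f \<gamma>))"
      "\<forall>\<gamma>\<in>multi_indices k. bdd_above (quot_set \<psi> k (Dlist f \<gamma>))"
    using assms unfolding in_Cpsi_def by blast
  moreover from this have "psi_order \<psi> = k" by (intro psi_order_eqI)
  ultimately show "\<And>\<gamma>. set \<gamma> \<subseteq> Basis \<Longrightarrow> length \<gamma> \<le> psi_order \<psi> \<Longrightarrow>
           Dexists f \<gamma> \<and> bounded (range (Dlist f \<gamma>))"
    and "\<And>\<gamma>. \<gamma> \<in> multi_indices (psi_order \<psi>) \<Longrightarrow> bdd_above (quot_set \<psi> (psi_order \<psi>) (Dlist f \<gamma>))"
    by auto
qed

lemma multi_indices_0: "multi_indices 0 = {[]}"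
  by (auto simp: multi_indices_def)

lemma multi_indices_Suc_0: "multi_indices (Suc 0) = (\<lambda>b. [b]) ` Basis"
  by (auto simp: multi_indices_def length_Suc_conv)

lemma Cpsi_norm_order0:
  "psi_order \<psi> = 0 \<Longrightarrow> Cpsi_norm \<psi> f = sup_norm f + holder_seminorm \<psi> 0 f"
  by (simp add: Cpsi_norm_def Dnorm_def Dholder_def multi_indices_0)

lemma second_diff_seminorm_le_holder_seminorm:
  fixes f :: "'a::euclidean_space \<Rightarrow> real"
  assumes pos: "\<And>r. 0 < r \<Longrightarrow> r \<le> 1 \<Longrightarrow> 0 < \<psi> r" and bdd: "bdd_above (quot_set \<psi> 0 f)"
  shows "bdd_above (second_diff_set \<psi> f)" and "second_diff_seminorm \<psi> f \<le> 2 * holder_seminorm \<psi> 0 f"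
proof -
  have "\<bar>f (x + h) - 2 * f x + f (x - h)\<bar> \<le> (2 * holder_seminorm \<psi> 0 f) * \<psi> (norm h)"
    if "0 < norm h" "norm h \<le> 1" for x h
    using holder_seminorm_upper[OF pos bdd that, of x] holder_seminorm_upper[OF pos bdd that, of "x - h"] that
    by simp
  from second_diff_seminorm_least[OF pos this]
  show "bdd_above (second_diff_set \<psi> f)" and "second_diff_seminorm \<psi> f \<le> 2 * holder_seminorm \<psi> 0 f"
    by simp_all
qed

lemma holder_seminorm_le_second_diff_seminorm:
  fixes f :: "'a::euclidean_space \<Rightarrow> real" and \<psi> :: "real \<Rightarrow> real"
  assumes one: "\<psi> 1 = 1" and pos: "\<And>r. 0 < r \<Longrightarrow> r \<le> 1 \<Longrightarrow> 0 < \<psi> r"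
    and dec: "\<And>r R. 0 < r \<Longrightarrow> r \<le> R \<Longrightarrow> R \<le> 1 \<Longrightarrow> \<psi> R \<le> C * (R/r) powr \<beta> * \<psi> r"
    and "\<beta> < 1" "0 \<le> C" and "bounded (range f)" and bdd: "bdd_above (second_diff_set \<psi> f)"
  shows "holder_seminorm \<psi> 0 f
    \<le> 2 * C * sup_norm f + C / (2 * (1 - 2 powr (\<beta> - 1))) * second_diff_seminorm \<psi> f"
proof (rule holder_seminorm_least(2)[OF pos])
  fix x h :: 'a
  assume "0 < norm h" "norm h \<le> 1"
  with first_difference_le_second_difference[OF one pos dec \<open>\<beta> < 1\<close> \<open>0 \<le> C\<close>
      sup_norm_upper[OF \<open>bounded (range f)\<close>] second_diff_seminorm_nonneg[OF pos bdd]
      second_diff_seminorm_upper[OF pos bdd]]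
  show "\<bar>f (x + h) - f x\<bar> \<le> (2 * C * sup_norm f + C / (2 * (1 - 2 powr (\<beta> - 1))) * second_diff_seminorm \<psi> f)
      * (\<psi> (norm h) * norm h powr - real 0)"
    by (simp add: mult_ac)
qed

lemma Cpsi_norm_comparable_order0:
  fixes f :: "'a::euclidean_space \<Rightarrow> real" and \<psi> :: "real \<Rightarrow> real" and C \<beta> :: real
  defines "K \<equiv> 2 + 2 * C + C / (2 * (1 - 2 powr (\<beta> - 1)))"
  assumes one: "\<psi> 1 = 1" and pos: "\<And>r. 0 < r \<Longrightarrow> r \<le> 1 \<Longrightarrow> 0 < \<psi> r"
    and dec: "\<And>r R. 0 < r \<Longrightarrow> r \<le> R \<Longrightarrow> R \<le> 1 \<Longrightarrow> \<psi> R \<le> C * (R/r) powr \<beta> * \<psi> r"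
    and "\<beta> < 1" "0 \<le> C" and order: "psi_order \<psi> = 0" and f: "in_Cpsi \<psi> f"
  shows "bdd_above (second_diff_set \<psi> f)"
    and "sup_norm f + second_diff_seminorm \<psi> f \<le> K * Cpsi_norm \<psi> f"
    and "Cpsi_norm \<psi> f \<le> K * (sup_norm f + second_diff_seminorm \<psi> f)"
proof -
  define M where "M = C / (2 * (1 - 2 powr (\<beta> - 1)))"
  define F where "F = sup_norm f"
  define H where "H = holder_seminorm \<psi> 0 f"
  define S where "S = second_diff_seminorm \<psi> f"
  have "bounded (range f)" using in_Cpsi_psi_order(1)[OF f, of "[]"] by simp
  have bdd_quot: "bdd_above (quot_set \<psi> 0 f)"
    using in_Cpsi_psi_order(2)[OF f, of "[]"] order by (simp add: multi_indices_0)
  note lower = second_diff_seminorm_le_holder_seminorm[OF pos bdd_quot]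
  show "bdd_above (second_diff_set \<psi> f)" by (rule lower(1))
  have "0 \<le> F" "0 \<le> H" "0 \<le> S"
    using sup_norm_nonneg[OF \<open>bounded (range f)\<close>] holder_seminorm_nonneg[OF pos bdd_quot]
      second_diff_seminorm_nonneg[OF pos lower(1)]
    by (simp_all add: F_def H_def S_def)
  have "2 powr (\<beta> - 1) < 1" using powr_less_one[of 2 "\<beta> - 1"] \<open>\<beta> < 1\<close> by simp
  then have "0 \<le> M" using \<open>0 \<le> C\<close> by (simp add: M_def)
  have K: "2 \<le> K" "1 + 2 * C \<le> K" "M \<le> K" using \<open>0 \<le> C\<close> \<open>0 \<le> M\<close> by (simp_all add: K_def M_def)
  have N: "Cpsi_norm \<psi> f = F + H" by (simp add: Cpsi_norm_order0[OF order] F_def H_def)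
  have "F + S \<le> 2 * (F + H)" using lower(2) \<open>0 \<le> F\<close> by (simp add: S_def H_def)
  also have "\<dots> \<le> K * (F + H)" using K \<open>0 \<le> F\<close> \<open>0 \<le> H\<close> by (intro mult_right_mono) simp_all
  finally show "sup_norm f + second_diff_seminorm \<psi> f \<le> K * Cpsi_norm \<psi> f" by (simp add: N F_def S_def)
  have "F + H \<le> (1 + 2 * C) * F + M * S"
    using holder_seminorm_le_second_diff_seminorm[OF one pos dec \<open>\<beta> < 1\<close> \<open>0 \<le> C\<close> \<open>bounded (range f)\<close> lower(1)]
    by (simp add: F_def H_def S_def M_def algebra_simps)
  also have "\<dots> \<le> K * F + K * S"
    using K \<open>0 \<le> F\<close> \<open>0 \<le> S\<close> by (intro add_mono mult_right_mono) simp_all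
  finally show "Cpsi_norm \<psi> f \<le> K * (sup_norm f + second_diff_seminorm \<psi> f)"
    by (simp add: N F_def S_def distrib_left)
qed

lemma Dnorm_Suc_0:
  fixes f :: "'a::euclidean_space \<Rightarrow> real"
  shows "Dnorm (Suc 0) f = (MAX b\<in>Basis. sup_norm (dirderiv f b))"
  by (simp add: Dnorm_def multi_indices_Suc_0 image_image)

lemma Dholder_Suc_0:
  fixes f :: "'a::euclidean_space \<Rightarrow> real"
  shows "Dholder \<psi> (Suc 0) f = (MAX b\<in>Basis. holder_seminorm \<psi> (Suc 0) (dirderiv f b))"
  by (simp add: Dholder_def multi_indices_Suc_0 image_image)

lemma Cpsi_norm_order1:
  "psi_order \<psi> = 1 \<Longrightarrow> Cpsi_norm \<psi> f = sup_norm f + Dnorm 1 f + Dholder \<psi> 1 f"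
  by (simp add: Cpsi_norm_def Dnorm_def multi_indices_0)

lemma in_Cpsi_order1D:
  fixes f :: "'a::euclidean_space \<Rightarrow> real"
  assumes f: "in_Cpsi \<psi> f" and order: "psi_order \<psi> = 1" and b: "b \<in> Basis"
  shows "((\<lambda>t. f (z + t *\<^sub>R b)) has_real_derivative dirderiv f b z) (at 0)"
    and "bounded (range (dirderiv f b))"
    and "bdd_above (quot_set \<psi> 1 (dirderiv f b))"
proof -
  have "Dexists f [b] \<and> bounded (range (Dlist f [b]))"
    using in_Cpsi_psi_order(1)[OF f, of "[b]"] order b by simp
  then show "((\<lambda>t. f (z + t *\<^sub>R b)) has_real_derivative dirderiv f b z) (at 0)"
    and "bounded (range (dirderiv f b))"
    by (simp_all add: dirderiv_has_real_derivative)
  show "bdd_above (quot_set \<psi> 1 (dirderiv f b))"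
    using in_Cpsi_psi_order(2)[OF f, of "[b]"] order b by (simp add: multi_indices_def)
qed

lemma Dnorm_Dholder_order1_nonneg:
  fixes f :: "'a::euclidean_space \<Rightarrow> real"
  assumes pos: "\<And>r. 0 < r \<Longrightarrow> r \<le> 1 \<Longrightarrow> 0 < \<psi> r"
    and f: "in_Cpsi \<psi> f" and order: "psi_order \<psi> = 1"
  shows "0 \<le> Dnorm 1 f" and "0 \<le> Dholder \<psi> 1 f"
proof -
  obtain b :: 'a where b: "b \<in> Basis" using SOME_Basis by blast
  have "0 \<le> sup_norm (dirderiv f b)" by (rule sup_norm_nonneg[OF in_Cpsi_order1D(2)[OF f order b]])
  also have "\<dots> \<le> Dnorm 1 f" using b by (simp add: Dnorm_Suc_0)
  finally show "0 \<le> Dnorm 1 f" .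
  have "0 \<le> holder_seminorm \<psi> 1 (dirderiv f b)"
    by (rule holder_seminorm_nonneg[OF pos in_Cpsi_order1D(3)[OF f order b]])
  also have "\<dots> \<le> Dholder \<psi> 1 f" using b by (simp add: Dholder_Suc_0)
  finally show "0 \<le> Dholder \<psi> 1 f" .
qed

lemma second_diff_seminorm_le_Dholder:
  fixes f :: "'a::euclidean_space \<Rightarrow> real"
  assumes pos: "\<And>r. 0 < r \<Longrightarrow> r \<le> 1 \<Longrightarrow> 0 < \<psi> r"
    and f: "in_Cpsi \<psi> f" and order: "psi_order \<psi> = 1"
  shows "bdd_above (second_diff_set \<psi> f)" and "second_diff_seminorm \<psi> f \<le> DIM('a) * Dholder \<psi> 1 f"
proof -
  define DH where "DH = Dholder \<psi> 1 f"
  have holder_le: "holder_seminorm \<psi> 1 (dirderiv f b) \<le> DH" if "b \<in> Basis" for b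
    using that by (simp add: DH_def Dholder_Suc_0)
  have "\<bar>f (x + h) - 2 * f x + f (x - h)\<bar> \<le> (DIM('a) * DH) * \<psi> (norm h)"
    if h: "0 < norm h" "norm h \<le> 1" for x h
  proof -
    have "\<bar>dirderiv f b (z + h) - dirderiv f b z\<bar> \<le> DH * \<psi> (norm h) / norm h" if "b \<in> Basis" for b z
    proof -
      have "\<bar>dirderiv f b (z + h) - dirderiv f b z\<bar>
          \<le> holder_seminorm \<psi> 1 (dirderiv f b) * (\<psi> (norm h) * norm h powr (- real 1))"
        using holder_seminorm_upper[OF pos in_Cpsi_order1D(3)[OF f order that] h] .
      also have "\<dots> \<le> DH * (\<psi> (norm h) * norm h powr (- real 1))"
        using holder_le[OF that] pos[OF h] h by (intro mult_right_mono) simp_all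
      finally show ?thesis using h by (simp add: powr_minus_divide)
    qed
    then have "\<bar>f (x + h) - 2 * f x + f (x - h)\<bar> \<le> DIM('a) * norm h * (DH * \<psi> (norm h) / norm h)"
      by (intro second_difference_le_partial_derivative_difference[OF in_Cpsi_order1D(1)[OF f order]])
    with h show ?thesis by simp
  qed
  from second_diff_seminorm_least[OF pos this]
  show "bdd_above (second_diff_set \<psi> f)" and "second_diff_seminorm \<psi> f \<le> DIM('a) * Dholder \<psi> 1 f"
    by (simp_all add: DH_def)
qed

lemma Dnorm_Dholder_order1_le:
  fixes f :: "'a::euclidean_space \<Rightarrow> real" and \<psi> :: "real \<Rightarrow> real" and c \<alpha> :: real
  defines "Q \<equiv> 1 / (c * (1 - 2 powr (1 - \<alpha>)))"
  assumes one: "\<psi> 1 = 1" and pos: "\<And>r. 0 < r \<Longrightarrow> r \<le> 1 \<Longrightarrow> 0 < \<psi> r"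
    and inc: "\<And>r R. 0 < r \<Longrightarrow> r \<le> R \<Longrightarrow> R \<le> 1 \<Longrightarrow> \<psi> r \<le> (r/R) powr \<alpha> * \<psi> R / c"
    and "0 < c" "1 < \<alpha>" and f: "in_Cpsi \<psi> f" and order: "psi_order \<psi> = 1"
    and bdd: "bdd_above (second_diff_set \<psi> f)"
  shows "Dnorm 1 f \<le> 2 * sup_norm f + Q * second_diff_seminorm \<psi> f"
    and "Dholder \<psi> 1 f \<le> (2 / c + 2 * Q) * second_diff_seminorm \<psi> f"
proof -
  define F where "F = sup_norm f"
  define S where "S = second_diff_seminorm \<psi> f"
  have "bounded (range f)" using in_Cpsi_psi_order(1)[OF f, of "[]"] by simp
  then have F: "\<And>x. \<bar>f x\<bar> \<le> F" by (simp add: F_def sup_norm_upper)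
  have S: "0 \<le> S" "\<And>x h. 0 < norm h \<Longrightarrow> norm h \<le> 1 \<Longrightarrow> \<bar>f (x + h) - 2 * f x + f (x - h)\<bar> \<le> S * \<psi> (norm h)"
    using second_diff_seminorm_nonneg[OF pos bdd] second_diff_seminorm_upper[OF pos bdd]
    by (simp_all add: S_def)
  have SQ: "S / (c * (1 - 2 powr (1 - \<alpha>))) = Q * S" by (simp add: Q_def)
  have "sup_norm (dirderiv f b) \<le> 2 * F + Q * S" if b: "b \<in> Basis" for b
  proof (rule sup_norm_least)
    fix y
    show "\<bar>dirderiv f b y\<bar> \<le> 2 * F + Q * S"
      using partial_derivative_le[OF in_Cpsi_order1D(1)[OF f order b] _ one pos inc \<open>0 < c\<close> \<open>1 < \<alpha>\<close> S(1) F S(2)] b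
      by (simp add: SQ)
  qed
  then show "Dnorm 1 f \<le> 2 * sup_norm f + Q * second_diff_seminorm \<psi> f"
    by (simp add: Dnorm_Suc_0 F_def S_def)
  have "holder_seminorm \<psi> 1 (dirderiv f b) \<le> (2 / c + 2 * Q) * S" if b: "b \<in> Basis" for b
  proof (rule holder_seminorm_least(2)[OF pos])
    fix x h :: 'a assume h: "0 < norm h" "norm h \<le> 1"
    have "\<bar>dirderiv f b (x + h) - dirderiv f b x\<bar> * norm h
        \<le> (2 * S / c + 2 * S / (c * (1 - 2 powr (1 - \<alpha>)))) * \<psi> (norm h)"
      using partial_derivative_difference_le[OF in_Cpsi_order1D(1)[OF f order b] _ pos inc \<open>0 < c\<close> \<open>1 < \<alpha>\<close> S h] b
      by simp
    also have "2 * S / c + 2 * S / (c * (1 - 2 powr (1 - \<alpha>))) = (2 / c + 2 * Q) * S"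
      by (simp add: Q_def distrib_right)
    finally have "\<bar>dirderiv f b (x + h) - dirderiv f b x\<bar> * norm h \<le> ((2 / c + 2 * Q) * S) * \<psi> (norm h)" .
    with h show "\<bar>dirderiv f b (x + h) - dirderiv f b x\<bar> \<le> (2 / c + 2 * Q) * S * (\<psi> (norm h) * norm h powr - real 1)"
      by (simp add: powr_minus_divide field_simps)
  qed
  then show "Dholder \<psi> 1 f \<le> (2 / c + 2 * Q) * second_diff_seminorm \<psi> f"
    by (simp add: Dholder_Suc_0 S_def)
qed

lemma Cpsi_norm_comparable_order1:
  fixes f :: "'a::euclidean_space \<Rightarrow> real" and \<psi> :: "real \<Rightarrow> real" and c \<alpha> :: real
  defines "K \<equiv> 3 + DIM('a) + 2 / c + 3 / (c * (1 - 2 powr (1 - \<alpha>)))"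
  assumes one: "\<psi> 1 = 1" and pos: "\<And>r. 0 < r \<Longrightarrow> r \<le> 1 \<Longrightarrow> 0 < \<psi> r"
    and inc: "\<And>r R. 0 < r \<Longrightarrow> r \<le> R \<Longrightarrow> R \<le> 1 \<Longrightarrow> \<psi> r \<le> (r/R) powr \<alpha> * \<psi> R / c"
    and "0 < c" "1 < \<alpha>" and order: "psi_order \<psi> = 1" and f: "in_Cpsi \<psi> f"
  shows "bdd_above (second_diff_set \<psi> f)"
    and "sup_norm f + second_diff_seminorm \<psi> f \<le> K * Cpsi_norm \<psi> f"
    and "Cpsi_norm \<psi> f \<le> K * (sup_norm f + second_diff_seminorm \<psi> f)"
proof -
  define Q where "Q = 1 / (c * (1 - 2 powr (1 - \<alpha>)))"
  define F where "F = sup_norm f"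
  define S where "S = second_diff_seminorm \<psi> f"
  have "2 powr (1 - \<alpha>) < 1" using powr_less_one[of 2 "1 - \<alpha>"] \<open>1 < \<alpha>\<close> by simp
  then have "0 \<le> Q" using \<open>0 < c\<close> by (simp add: Q_def)
  have "bounded (range f)" using in_Cpsi_psi_order(1)[OF f, of "[]"] by simp
  then have "0 \<le> F" by (simp add: F_def sup_norm_nonneg)
  note nonneg = Dnorm_Dholder_order1_nonneg[OF pos f order]
  note lower = second_diff_seminorm_le_Dholder[OF pos f order]
  note upper = Dnorm_Dholder_order1_le[OF one pos inc \<open>0 < c\<close> \<open>1 < \<alpha>\<close> f order lower(1)]
  show "bdd_above (second_diff_set \<psi> f)" by (rule lower(1))
  have "0 \<le> S" unfolding S_def by (rule second_diff_seminorm_nonneg[OF pos lower(1)])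
  have N: "Cpsi_norm \<psi> f = F + Dnorm 1 f + Dholder \<psi> 1 f" by (simp add: Cpsi_norm_order1[OF order] F_def)
  have K: "1 \<le> K" "DIM('a) \<le> K" "3 \<le> K" "3 * Q + 2 / c \<le> K"
    using \<open>0 \<le> Q\<close> \<open>0 < c\<close> by (simp_all add: K_def Q_def)
  have "F + S \<le> F + DIM('a) * Dholder \<psi> 1 f" using lower(2) by (simp add: S_def)
  also have "\<dots> \<le> K * F + K * Dholder \<psi> 1 f"
    using mult_right_mono[OF K(1) \<open>0 \<le> F\<close>] mult_right_mono[OF K(2) nonneg(2)]
    by simp
  also have "\<dots> \<le> K * (F + Dnorm 1 f + Dholder \<psi> 1 f)"
    using K nonneg(1) by (simp add: distrib_left)
  finally show "sup_norm f + second_diff_seminorm \<psi> f \<le> K * Cpsi_norm \<psi> f"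
    by (simp add: N F_def S_def)
  have "Dnorm 1 f \<le> 2 * F + Q * S" and "Dholder \<psi> 1 f \<le> (2 / c + 2 * Q) * S"
    using upper by (simp_all add: F_def S_def Q_def)
  moreover have "(3 * Q + 2 / c) * S = Q * S + (2 / c + 2 * Q) * S" by (simp add: algebra_simps)
  ultimately have "F + Dnorm 1 f + Dholder \<psi> 1 f \<le> 3 * F + (3 * Q + 2 / c) * S" by linarith
  also have "\<dots> \<le> K * F + K * S"
    using K \<open>0 \<le> F\<close> \<open>0 \<le> S\<close> by (intro add_mono mult_right_mono) simp_all
  finally show "Cpsi_norm \<psi> f \<le> K * (sup_norm f + second_diff_seminorm \<psi> f)"
    by (simp add: N F_def S_def distrib_left)
qed

lemma Cpsi_norm_comparable:
  fixes \<psi> :: "real \<Rightarrow> real"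
  assumes one: "\<psi> 1 = 1" and pos: "\<And>r. 0 < r \<Longrightarrow> r \<le> 1 \<Longrightarrow> 0 < \<psi> r"
    and idx: "index_interval \<psi> \<subseteq> ereal ` ({0<..<1} \<union> {1<..<2})"
  shows "\<exists>K\<ge>1. \<forall>f :: 'a::euclidean_space \<Rightarrow> real. in_Cpsi \<psi> f \<longrightarrow>
           bdd_above (second_diff_set \<psi> f) \<and>
           sup_norm f + second_diff_seminorm \<psi> f \<le> K * Cpsi_norm \<psi> f \<and>
           Cpsi_norm \<psi> f \<le> K * (sup_norm f + second_diff_seminorm \<psi> f)"
  using one idx
proof (cases rule: psi_order_cases)
  case (order0 \<beta>)
  obtain C where "1 \<le> C" and dec: "\<And>r R. 0 < r \<Longrightarrow> r \<le> R \<Longrightarrow> R \<le> 1 \<Longrightarrow> \<psi> R \<le> C * (R/r) powr \<beta> * \<psi> r"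
    using almost_decreasing_powrD[OF order0(3)] by blast
  have "2 powr (\<beta> - 1) < 1" using powr_less_one[of 2 "\<beta> - 1"] order0(2) by simp
  define K where "K = 2 + 2 * C + C / (2 * (1 - 2 powr (\<beta> - 1)))"
  have "1 \<le> K" using \<open>2 powr (\<beta> - 1) < 1\<close> \<open>1 \<le> C\<close> by (simp add: K_def)
  moreover have "bdd_above (second_diff_set \<psi> f) \<and>
      sup_norm f + second_diff_seminorm \<psi> f \<le> K * Cpsi_norm \<psi> f \<and>
      Cpsi_norm \<psi> f \<le> K * (sup_norm f + second_diff_seminorm \<psi> f)"
    if "in_Cpsi \<psi> f" for f :: "'a \<Rightarrow> real"
    using Cpsi_norm_comparable_order0[OF one pos dec order0(2) _ order0(1) that, folded K_def] \<open>1 \<le> C\<close>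
    by simp
  ultimately show ?thesis by (intro exI[of _ K]) simp
next
  case (order1 \<alpha>)
  obtain c where "0 < c" and inc: "\<And>r R. 0 < r \<Longrightarrow> r \<le> R \<Longrightarrow> R \<le> 1 \<Longrightarrow> \<psi> r \<le> (r/R) powr \<alpha> * \<psi> R / c"
    using almost_increasing_powrD[OF order1(3)] by blast
  have "2 powr (1 - \<alpha>) < 1" using powr_less_one[of 2 "1 - \<alpha>"] order1(2) by simp
  define K where "K = 3 + DIM('a) + 2 / c + 3 / (c * (1 - 2 powr (1 - \<alpha>)))"
  have "1 \<le> K" using \<open>2 powr (1 - \<alpha>) < 1\<close> \<open>0 < c\<close> by (simp add: K_def)
  moreover have "bdd_above (second_diff_set \<psi> f) \<and>
      sup_norm f + second_diff_seminorm \<psi> f \<le> K * Cpsi_norm \<psi> f \<and>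
      Cpsi_norm \<psi> f \<le> K * (sup_norm f + second_diff_seminorm \<psi> f)"
    if "in_Cpsi \<psi> f" for f :: "'a \<Rightarrow> real"
    using Cpsi_norm_comparable_order1[OF one pos inc \<open>0 < c\<close> order1(2) order1(1) that, folded K_def]
    by simp
  ultimately show ?thesis by (intro exI[of _ K]) simp
qed

theorem proposition2p5:
  fixes \<psi> :: "real \<Rightarrow> real"
  assumes pos: "\<forall>r. 0 < r \<and> r \<le> 1 \<longrightarrow> 0 < \<psi> r"
    and one: "\<psi> 1 = 1"
    and lim: "(\<psi> \<longlongrightarrow> 0) (at_right 0)"
    and idx: "index_interval \<psi> \<subseteq> ereal ` ({0<..<1} \<union> {1<..<2})"
  shows "\<exists>c::real. 1 \<le> c \<and>
           (\<forall>f :: 'a::euclidean_space \<Rightarrow> real. in_Cpsi \<psi> f \<longrightarrow>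
              bdd_above (second_diff_set \<psi> f) \<and>
              (1 / c) * (sup_norm f + second_diff_seminorm \<psi> f) \<le> Cpsi_norm \<psi> f \<and>
              Cpsi_norm \<psi> f \<le> c * (sup_norm f + second_diff_seminorm \<psi> f))"
proof -
  have pos': "\<And>r. 0 < r \<Longrightarrow> r \<le> 1 \<Longrightarrow> 0 < \<psi> r" using pos by blast
  obtain K where "1 \<le> K"
    and K: "\<forall>f :: 'a \<Rightarrow> real. in_Cpsi \<psi> f \<longrightarrow>
           bdd_above (second_diff_set \<psi> f) \<and>
           sup_norm f + second_diff_seminorm \<psi> f \<le> K * Cpsi_norm \<psi> f \<and>
           Cpsi_norm \<psi> f \<le> K * (sup_norm f + second_diff_seminorm \<psi> f)"
    using Cpsi_norm_comparable[OF one pos' idx] by blast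
  show ?thesis
  proof (intro exI[of _ K] conjI allI impI)
    fix f :: "'a \<Rightarrow> real"
    assume "in_Cpsi \<psi> f"
    with K show "bdd_above (second_diff_set \<psi> f)"
      and "Cpsi_norm \<psi> f \<le> K * (sup_norm f + second_diff_seminorm \<psi> f)"
      by simp_all
    from K \<open>in_Cpsi \<psi> f\<close> \<open>1 \<le> K\<close>
    show "(1 / K) * (sup_norm f + second_diff_seminorm \<psi> f) \<le> Cpsi_norm \<psi> f"
      by (simp add: divide_le_eq mult.commute)
  qed fact
qed

end
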